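(* Let $P\subset\mathbb R^2$ be an $\mathbb R$-$\Delta_2$-free polygon and $F$ a facet (edge) of $P$. Then $F$ is locked if and only if $P$ contains an $\mathbb R$-unimodular copy $\Delta$ of $\Delta_2$ such that the face $\mathcal F:=F\cap\Delta$ of $\Delta$ is nonempty and contained in the relative interior of $F$, and the face $\ell$ of $\Delta$ opposite to $\mathcal F$ (the convex hull of the vertices of $\Delta$ not in $\mathcal F$) satisfies $\dim(P\div\ell)=2$.
   Context: A polygon is a two-dimensional convex polytope in $\mathbb R^2$. $\Delta_2=\mathrm{conv}(\mathbf 0,e_1,e_2)$. An $\mathbb R$-unimodular copy of $X$ is $T(X)$ where $T(x)=Mx+b$, $M\in\mathrm{GL}_2(\mathbb Z)$, $b\in\mathbb R^2$. A convex set is $\mathbb R$-$\Delta_2$-free if its relative interior contains no $\mathbb R$-unimodular copy of $\Delta_2$. A point is beyond a facet $F$ of $P$ if it lies in the open half-plane bounded by the line spanned by $F$ not containing $\mathrm{int}(P)$. A facet $F$ of an $\mathbb R$-$\Delta_2$-free polygon $P$ is locked if for every $x\in\mathbb R^2$ beyond $F$, the interior of $\mathrm{conv}(P\cup\{x\})$ contains an $\mathbb R$-unimodular copy of $\Delta_2$. Minkowski difference: $A\div B=\{x: B+x\subset A\}$; dimension of a convex set is that of its affine hull. *)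

theory Defs
  imports "HOL-Analysis.Analysis"
begin

definition polygon :: "(real^2) set \<Rightarrow> bool" where
  "polygon P \<longleftrightarrow> polytope P \<and> aff_dim P = 2"

definition Delta2 :: "(real^2) set" where
  "Delta2 = convex hull {0, axis 1 1, axis 2 1}"

definition R_unimodular_map :: "(real^2 \<Rightarrow> real^2) \<Rightarrow> bool" where
  "R_unimodular_map T \<longleftrightarrow>
     (\<exists>(M::real^2^2) b. (\<forall>i j. M$i$j \<in> \<int>) \<and> \<bar>det M\<bar> = 1 \<and> T = (\<lambda>x. M *v x + b))"

definition R_unimodular_copy :: "(real^2) set \<Rightarrow> (real^2) set \<Rightarrow> bool" where
  "R_unimodular_copy X Y \<longleftrightarrow> (\<exists>T. R_unimodular_map T \<and> Y = T ` X)"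

definition R_Delta2_free :: "(real^2) set \<Rightarrow> bool" where
  "R_Delta2_free C \<longleftrightarrow> convex C \<and>
     \<not> (\<exists>D. R_unimodular_copy Delta2 D \<and> D \<subseteq> rel_interior C)"

definition beyond :: "(real^2) set \<Rightarrow> (real^2) set \<Rightarrow> real^2 \<Rightarrow> bool" where
  "beyond F P x \<longleftrightarrow>
     (\<exists>a b. a \<noteq> 0 \<and> affine hull F = {y. a \<bullet> y = b} \<and>
            interior P \<subseteq> {y. a \<bullet> y < b} \<and> a \<bullet> x > b)"

definition locked :: "(real^2) set \<Rightarrow> (real^2) set \<Rightarrow> bool" where
  "locked F P \<longleftrightarrow> R_Delta2_free P \<and> polygon P \<and> F facet_of P \<and>
     (\<forall>x. beyond F P x \<longrightarrow>
        (\<exists>D. R_unimodular_copy Delta2 D \<and> D \<subseteq> interior (convex hull (insert x P))))"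

definition mink_diff :: "(real^2) set \<Rightarrow> (real^2) set \<Rightarrow> (real^2) set" where
  "mink_diff A B = {x. (\<lambda>y. y + x) ` B \<subseteq> A}"

end

theory Submission
  imports Defs
begin

text \<open>
  Write \<open>C x\<close> for the cap \<open>conv (P \<union> {x})\<close> and \<open>L\<close> for the face of \<open>\<Delta>\<close> opposite
  to \<open>F \<inter> \<Delta>\<close>. If \<open>x\<close> lies beyond \<open>F\<close>, then \<open>relint F \<subseteq> int (C x)\<close>; so a small
  translation of \<open>\<Delta>\<close> towards an interior point of \<open>P \<div> L\<close> moves \<open>L\<close> into \<open>int P\<close> and
  keeps the vertices on \<open>F\<close> inside the open set \<open>int (C x)\<close>: the facet is locked.

  Conversely, apply lockedness to apexes \<open>x\<^sub>n\<close> beyond the midpoint of \<open>F\<close> converging to it.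
  The copies of \<open>\<Delta>\<^sub>2\<close> in \<open>int (C x\<^sub>n)\<close> are bounded, so along a subsequence they are
  \<open>\<Delta> + t\<^sub>n\<close> with \<open>\<Delta>\<close> fixed and \<open>t\<^sub>n \<rightarrow> 0\<close>. Then \<open>\<Delta> \<subseteq> P\<close>; as \<open>P\<close> is
  \<open>\<Delta>\<^sub>2\<close>-free, \<open>\<Delta>\<close> touches the line of \<open>F\<close> and every \<open>t\<^sub>n\<close> points strictly
  outward, which prevents \<open>\<Delta>\<close> from containing both endpoints of \<open>F\<close>. Sliding \<open>\<Delta>\<close>
  slightly along \<open>F\<close> away from an endpoint it misses puts \<open>F \<inter> \<Delta>\<close> into \<open>relint F\<close>
  while keeping \<open>\<Delta> \<subseteq> P\<close>; the vertices of \<open>\<Delta>\<close> off the line, shifted by \<open>t\<^sub>n\<close>, lie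
  in \<open>int P\<close>, so \<open>P \<div> L\<close> has interior points.
\<close>

lemma at_right_0_witness:
  assumes "\<forall>\<^sub>F x in at_right (0::real). Q x"
  obtains x where "0 < x" "Q x"
proof -
  obtain d where "d > 0" "\<forall>y>0. y < d \<longrightarrow> Q y"
    using assms unfolding eventually_at_right_field by blast
  then show ?thesis using that[of "d/2"] by simp
qed

lemma image_add_convex_hull:
  "(\<lambda>y. y + u) ` (convex hull S) = convex hull ((\<lambda>y. y + (u::'a::real_vector)) ` S)"
  using convex_hull_translation[of u S] by (simp add: add.commute)

lemma affine_image_Delta2:
  "(\<lambda>y. (M::real^2^2) *v y + c) ` Delta2 = convex hull {c, M *v axis 1 1 + c, M *v axis 2 1 + c}"
proof -
  have "(\<lambda>y. M *v y + c) ` Delta2 = (\<lambda>y. y + c) ` ((\<lambda>y. M *v y) ` Delta2)"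
    by (simp add: image_image)
  also have "(\<lambda>y. M *v y) ` Delta2 = convex hull ((\<lambda>y. M *v y) ` {0, axis 1 1, axis 2 1})"
    unfolding Delta2_def using convex_hull_linear_image[OF matrix_vector_mul_linear] by blast
  finally show ?thesis by (simp add: image_add_convex_hull)
qed

lemma translate_affine_image:
  "(\<lambda>y. y + t) ` ((\<lambda>y. (M::real^2^2) *v y + c) ` Delta2) = (\<lambda>y. M *v y + (c + t)) ` Delta2"
  by (simp add: image_image add.assoc)

lemma R_unimodular_copy_affine_image:
  assumes "\<forall>i j. M$i$j \<in> \<int>" "\<bar>det M\<bar> = 1"
  shows "R_unimodular_copy Delta2 ((\<lambda>y. M *v y + c) ` Delta2)"
  using assms unfolding R_unimodular_copy_def R_unimodular_map_def by blast

lemma orthogonal_to_same_imp_parallel_2: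
  fixes a f u :: "real^2"
  assumes "a \<noteq> 0" "f \<noteq> 0" "a \<bullet> f = 0" "a \<bullet> u = 0"
  shows "u = ((u \<bullet> f) / (f \<bullet> f)) *\<^sub>R f"
proof -
  have a: "a$1 \<noteq> 0 \<or> a$2 \<noteq> 0" using assms(1) by (metis exhaust_2 vec_eq_iff zero_index)
  have f: "f$1 \<noteq> 0 \<or> f$2 \<noteq> 0" using assms(2) by (metis exhaust_2 vec_eq_iff zero_index)
  have af: "a$1 * f$1 + a$2 * f$2 = 0" and au: "a$1 * u$1 + a$2 * u$2 = 0"
    using assms(3,4) by (simp_all add: inner_vec_def sum_2)
  have cross: "u$1 * f$2 = u$2 * f$1"
  proof (cases "a$1 = 0")
    case True
    then show ?thesis using a af au by auto
  next
    case False
    then have "f$1 = - a$2 * f$2 / a$1" "u$1 = - a$2 * u$2 / a$1" using af au by (auto simp: field_simps)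
    then show ?thesis by (simp add: field_simps)
  qed
  have nf: "f$1*f$1 + f$2*f$2 \<noteq> 0" using f by (simp add: sum_squares_eq_zero_iff)
  have "u$1 = (u$1*f$1 + u$2*f$2) / (f$1*f$1 + f$2*f$2) * f$1"
       "u$2 = (u$1*f$1 + u$2*f$2) / (f$1*f$1 + f$2*f$2) * f$2"
    using nf cross by (simp_all add: field_simps)
  then show ?thesis by (simp add: vec_eq_iff forall_2 inner_vec_def sum_2)
qed

section \<open>Caps over an edge\<close>

definition segments_meet_line_in :: "(real^2) set \<Rightarrow> real^2 \<Rightarrow> real \<Rightarrow> real^2 \<Rightarrow> bool" where
  "segments_meet_line_in P a b x \<longleftrightarrow> (\<forall>p\<in>P. \<forall>w\<in>closed_segment p x. a \<bullet> w = b \<longrightarrow> w \<in> P)"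

lemma closed_segment_split_at_hyperplane:
  fixes p x z a :: "'a::real_inner"
  assumes p: "a \<bullet> p \<le> b" and x: "b < a \<bullet> x" and z: "z \<in> closed_segment p x"
  obtains w where "w \<in> closed_segment p x" "a \<bullet> w = b"
    "a \<bullet> z \<le> b \<Longrightarrow> z \<in> closed_segment p w" "b \<le> a \<bullet> z \<Longrightarrow> z \<in> closed_segment w x"
proof -
  obtain u where u: "0 \<le> u" "u \<le> 1" and zp: "z = p + u *\<^sub>R (x - p)"
    using z unfolding in_segment by (auto simp: algebra_simps)
  have az: "a \<bullet> z = a \<bullet> p + u * (a \<bullet> x - a \<bullet> p)" using zp by (simp add: inner_simps)
  have den: "a \<bullet> x - a \<bullet> p > 0" using p x by auto
  define mu where "mu = (b - a \<bullet> p) / (a \<bullet> x - a \<bullet> p)"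
  have mu: "0 \<le> mu" "mu < 1" using den p x unfolding mu_def by (auto simp: field_simps)
  define w where "w = p + mu *\<^sub>R (x - p)"
  have "mu * (a \<bullet> x - a \<bullet> p) = b - a \<bullet> p" unfolding mu_def using den by simp
  then have aw: "a \<bullet> w = b" unfolding w_def by (simp add: inner_simps algebra_simps)
  have "w \<in> closed_segment p x" unfolding in_segment w_def using mu
    by (intro exI[of _ mu]) (auto simp: algebra_simps)
  moreover have "z \<in> closed_segment p w" if "a \<bullet> z \<le> b"
  proof (cases "u = 0")
    case True then show ?thesis using zp by simp
  next
    case False
    have "u * (a \<bullet> x - a \<bullet> p) \<le> b - a \<bullet> p" using that az by simp
    then have "u \<le> mu" unfolding mu_def using den by (simp add: field_simps)
    moreover have "mu > 0" using False u calculation by simp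
    moreover have "z = (1 - u/mu) *\<^sub>R p + (u/mu) *\<^sub>R w"
      unfolding zp w_def using calculation by (simp add: algebra_simps)
    ultimately show ?thesis unfolding in_segment using u by (auto intro!: exI[of _ "u/mu"])
  qed
  moreover have "z \<in> closed_segment w x" if "b \<le> a \<bullet> z"
  proof -
    have "b - a \<bullet> p \<le> u * (a \<bullet> x - a \<bullet> p)" using that az by simp
    then have ule: "mu \<le> u" unfolding mu_def using den by (simp add: field_simps)
    define lam where "lam = (u - mu) / (1 - mu)"
    have lam: "0 \<le> lam" "lam \<le> 1" unfolding lam_def using ule mu u by (auto simp: field_simps)
    have "lam * (1 - mu) = u - mu" unfolding lam_def using mu by simp
    then have coeff: "(1 - lam) * mu + lam = u" by (simp add: algebra_simps)
    have "(1 - lam) *\<^sub>R w + lam *\<^sub>R x = p + ((1 - lam) * mu + lam) *\<^sub>R (x - p)"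
      unfolding w_def by (simp add: algebra_simps)
    then have "z = (1 - lam) *\<^sub>R w + lam *\<^sub>R x" using zp coeff by simp
    then show ?thesis unfolding in_segment using lam by blast
  qed
  ultimately show ?thesis using that aw by blast
qed

lemma hull_insert_split_at_line:
  fixes P :: "(real^2) set"
  assumes cvx: "convex P" and sub: "P \<subseteq> {y. a \<bullet> y \<le> b}"
    and Fe: "P \<inter> {y. a \<bullet> y = b} = closed_segment e e'"
    and xb: "a \<bullet> x > b" and meet: "segments_meet_line_in P a b x"
    and z: "z \<in> convex hull (insert x P)"
  shows "(a \<bullet> z \<le> b \<longrightarrow> z \<in> P) \<and> (b \<le> a \<bullet> z \<longrightarrow> z \<in> convex hull {e,e',x})"
proof -
  have "P \<noteq> {}" using Fe by auto
  then obtain p where p: "p \<in> P" and "z \<in> closed_segment p x"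
    using z unfolding convex_hull_insert_segments convex_hull_eq[THEN iffD2, OF cvx]
    by (auto simp: closed_segment_commute)
  moreover have "a \<bullet> p \<le> b" using p sub by auto
  ultimately obtain w where w: "w \<in> closed_segment p x" "a \<bullet> w = b"
    "a \<bullet> z \<le> b \<Longrightarrow> z \<in> closed_segment p w" "b \<le> a \<bullet> z \<Longrightarrow> z \<in> closed_segment w x"
    using closed_segment_split_at_hyperplane xb by blast
  have wP: "w \<in> P" using meet p w(1,2) unfolding segments_meet_line_in_def by blast
  have "w \<in> convex hull {e,e',x}"
    using wP w(2) Fe segment_convex_hull hull_mono[of "{e,e'}" "{e,e',x}"] by blast
  then have "closed_segment w x \<subseteq> convex hull {e,e',x}"
    by (simp add: closed_segment_subset hull_inc)
  moreover have "closed_segment p w \<subseteq> P" using p wP cvx closed_segment_subset by blast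
  ultimately show ?thesis using w(3,4) by blast
qed

lemma above_edge_decomposition:
  fixes g g' x z a :: "real^2"
  assumes z: "z \<in> convex hull {g, g', x}" and x: "x = midpoint g g' + s *\<^sub>R a"
    and g: "a \<bullet> g = b" "a \<bullet> g' = b" and az: "a \<bullet> z > b" and s: "s > 0"
  shows "\<exists>k h. z - g = k *\<^sub>R (g' - g) + h *\<^sub>R a \<and> k > 0 \<and> 0 \<le> h \<and> h \<le> 2 * s * k"
proof -
  obtain u v w where uvw: "0 \<le> u" "0 \<le> v" "0 \<le> w" "u + v + w = 1"
    and zz: "z = u *\<^sub>R g + v *\<^sub>R g' + w *\<^sub>R x"
    using z unfolding convex_hull_3 by blast
  have "a \<bullet> midpoint g g' = b" using g by (simp add: midpoint_def inner_simps)
  then have "a \<bullet> z = (u + v + w) * b + w * s * (a \<bullet> a)"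
    unfolding zz x using g by (simp add: inner_simps algebra_simps)
  then have "w * s * (a \<bullet> a) > 0" using az uvw(4) by simp
  then have "w > 0" using uvw(3) by (cases "w = 0") auto
  moreover have "z - g = (v + w/2) *\<^sub>R (g' - g) + (w * s) *\<^sub>R a"
  proof -
    have u: "u = 1 - v - w" using uvw(4) by simp
    show ?thesis unfolding zz x u midpoint_def by (simp add: vec_eq_iff algebra_simps)
  qed
  ultimately show ?thesis using s uvw(2)
    by (intro exI[of _ "v + w/2"] exI[of _ "w * s"]) (simp add: algebra_simps)
qed

lemma open_edge_push_into_triangle:
  fixes a e e' x y w :: "real^2"
  assumes y: "y \<in> open_segment e e'" and e: "a \<bullet> e = b" "a \<bullet> e' = b" "e \<noteq> e'"
    and a: "a \<noteq> 0" and x: "a \<bullet> x > b" and w: "a \<bullet> w > 0"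
  obtains mu where "0 < mu" "y + mu *\<^sub>R w \<in> convex hull {e, e', x}"
proof -
  define f where "f = e' - e"
  have af: "a \<bullet> f = 0" and f0: "f \<noteq> 0" unfolding f_def using e by (simp_all add: inner_simps)
  obtain sig where sig: "0 < sig" "sig < 1" and yy: "y = (1 - sig) *\<^sub>R e + sig *\<^sub>R e'"
    using y unfolding in_segment by blast
  have "a \<bullet> y = b" unfolding yy using e by (simp add: inner_simps algebra_simps)
  then have axy: "a \<bullet> (x - y) > 0" using x by (simp add: inner_simps)
  define bet where "bet = (a \<bullet> w) / (a \<bullet> (x - y))"
  have bet: "bet > 0" unfolding bet_def using w axy by simp
  define alp where "alp = ((w - bet *\<^sub>R (x - y)) \<bullet> f) / (f \<bullet> f)"
  have "a \<bullet> (w - bet *\<^sub>R (x - y)) = 0" unfolding bet_def using axy by (simp add: inner_simps)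
  then have "w - bet *\<^sub>R (x - y) = alp *\<^sub>R f"
    unfolding alp_def by (rule orthogonal_to_same_imp_parallel_2[OF a f0 af])
  then have wdec: "w = alp *\<^sub>R f + bet *\<^sub>R (x - y)" by (simp add: algebra_simps)
  define A where "A mu = (1 - mu * bet) * (1 - sig) - mu * alp" for mu
  define B where "B mu = (1 - mu * bet) * sig + mu * alp" for mu
  \<comment> \<open>the barycentric coordinates of \<open>y + mu w\<close> tend to those of \<open>y\<close>, which are positive\<close>
  have "(A \<longlongrightarrow> A 0) (at_right 0)" "(B \<longlongrightarrow> B 0) (at_right 0)"
    unfolding A_def B_def by (intro tendsto_intros)+
  moreover have "A 0 > 0" "B 0 > 0" unfolding A_def B_def using sig by simp_all
  ultimately have "\<forall>\<^sub>F mu in at_right 0. 0 < A mu \<and> 0 < B mu"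
    by (intro eventually_conj) (auto intro: order_tendstoD(1))
  then obtain mu where mu: "0 < mu" "0 < A mu" "0 < B mu" by (rule at_right_0_witness) blast
  have "y + mu *\<^sub>R w = A mu *\<^sub>R e + B mu *\<^sub>R e' + (mu * bet) *\<^sub>R x"
    unfolding wdec yy A_def B_def f_def by (simp add: algebra_simps)
  moreover have "A mu + B mu + mu * bet = 1" unfolding A_def B_def by (simp add: algebra_simps)
  ultimately have "y + mu *\<^sub>R w \<in> convex hull {e, e', x}"
    unfolding convex_hull_3 using mu bet by (intro CollectI exI[of _ "A mu"] exI[of _ "B mu"] exI[of _ "mu * bet"]) auto
  then show ?thesis using that mu(1) by blast
qed

lemma open_segment_subset_interior_hull_insert:
  fixes P :: "(real^2) set"
  assumes q: "q \<in> interior P" "a \<bullet> q < b"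
    and e: "e \<in> P" "e' \<in> P" "a \<bullet> e = b" "a \<bullet> e' = b" "e \<noteq> e'"
    and a: "a \<noteq> 0" and x: "a \<bullet> x > b"
  shows "open_segment e e' \<subseteq> interior (convex hull (insert x P))"
proof
  fix y assume y: "y \<in> open_segment e e'"
  define C where "C = convex hull (insert x P)"
  obtain u where "y = (1 - u) *\<^sub>R e + u *\<^sub>R e'" using y unfolding in_segment by blast
  then have "a \<bullet> y = (1 - u) * (a \<bullet> e) + u * (a \<bullet> e')" by (simp add: inner_simps)
  then have "a \<bullet> y = b" using e by (simp add: algebra_simps)
  then have "a \<bullet> (y - q) > 0" using q by (simp add: inner_simps)
  then obtain mu where mu: "0 < mu" and z: "y + mu *\<^sub>R (y - q) \<in> convex hull {e, e', x}"
    using open_edge_push_into_triangle[OF y e(3-5) a x] by blast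
  have "convex hull {e, e', x} \<subseteq> C" unfolding C_def using e by (intro hull_mono) auto
  then have zC: "y + mu *\<^sub>R (y - q) \<in> closure C" using z closure_subset by blast
  have "P \<subseteq> C" unfolding C_def by (meson hull_subset subset_insertI subset_trans)
  then have "q \<in> interior C" using q(1) interior_mono by blast
  then have "open_segment q (y + mu *\<^sub>R (y - q)) \<subseteq> interior C"
    using in_interior_closure_convex_segment zC unfolding C_def by blast
  moreover have "y \<in> open_segment q (y + mu *\<^sub>R (y - q))"
  proof -
    define t where "t = 1/(1+mu)"
    have t: "t + t * mu = 1" unfolding t_def using mu by (simp add: field_simps)
    have "(1 - t) *\<^sub>R q + t *\<^sub>R (y + mu *\<^sub>R (y - q)) = (1 - (t + t * mu)) *\<^sub>R q + (t + t * mu) *\<^sub>R y"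
      by (simp add: algebra_simps)
    then have "y = (1 - t) *\<^sub>R q + t *\<^sub>R (y + mu *\<^sub>R (y - q))" unfolding t by simp
    moreover have "a \<bullet> (y + mu *\<^sub>R (y - q)) > b"
      using \<open>a \<bullet> (y - q) > 0\<close> \<open>a \<bullet> y = b\<close> mu by (simp add: inner_simps)
    then have "q \<noteq> y + mu *\<^sub>R (y - q)" using q(2) by auto
    moreover have "0 < t" "t < 1" unfolding t_def using mu by auto
    ultimately show ?thesis unfolding in_segment by blast
  qed
  ultimately show "y \<in> interior (convex hull (insert x P))" unfolding C_def by blast
qed

section \<open>Pushing a triangle into the cap\<close>

lemma R_unimodular_copy_translate:
  assumes "R_unimodular_copy Delta2 D"
  shows "R_unimodular_copy Delta2 ((\<lambda>y. y + t) ` D)"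
proof -
  obtain M c where "\<forall>i j. M$i$j \<in> \<int>" "\<bar>det M\<bar> = 1" "D = (\<lambda>y. M *v y + c) ` Delta2"
    using assms unfolding R_unimodular_copy_def R_unimodular_map_def by blast
  then show ?thesis by (simp add: translate_affine_image R_unimodular_copy_affine_image)
qed

lemma polygon_imp_convex: "polygon P \<Longrightarrow> convex P"
  and polygon_imp_compact: "polygon P \<Longrightarrow> compact P"
  unfolding polygon_def by (auto simp: polytope_imp_convex polytope_imp_compact)

lemma polygon_rel_interior_eq_interior: "polygon P \<Longrightarrow> rel_interior P = interior P"
  unfolding polygon_def using interior_rel_interior_gen[of P] by simp

lemma polygon_interior_nonempty: "polygon P \<Longrightarrow> interior P \<noteq> {}"
  using polygon_rel_interior_eq_interior[of P] polygon_imp_convex[of P] rel_interior_eq_empty[of P]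
  unfolding polygon_def by fastforce

lemma facet_of_polygon_segment:
  fixes P F :: "(real^2) set"
  assumes "polygon P" "F facet_of P"
  obtains a b e e' where "a \<noteq> 0" "P \<subseteq> {y. a \<bullet> y \<le> b}" "F = P \<inter> {y. a \<bullet> y = b}"
    "F = closed_segment e e'" "e \<noteq> e'" "affine hull F = {y. a \<bullet> y = b}"
proof -
  have pt: "polytope P" and ad: "aff_dim P = 2" using assms(1) unfolding polygon_def by auto
  obtain a b where ab: "a \<noteq> 0" "P \<subseteq> {y. a \<bullet> y \<le> b}" "F = P \<inter> {y. a \<bullet> y = b}"
    using facet_of_polyhedron[OF polytope_imp_polyhedron[OF pt] assms(2)] by blast
  have F: "F face_of P" "F \<noteq> {}" "aff_dim F = 1" using assms(2) ad unfolding facet_of_def by auto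
  have "polytope F" using face_of_polytope_polytope[OF pt F(1)] .
  moreover have "collinear F" using F(3) by (simp add: collinear_aff_dim)
  ultimately obtain e e' where ee: "F = closed_segment e e'"
    using compact_convex_collinear_segment[OF F(2)] polytope_imp_compact polytope_imp_convex by metis
  have "aff_dim F = aff_dim {y. a \<bullet> y = b}" using F(3) ab(1) by simp
  then have "affine hull F = affine hull {y. a \<bullet> y = b}"
    using aff_dim_eq_full_gen[of F "{y. a \<bullet> y = b}"] ab(3) by blast
  also have "\<dots> = {y. a \<bullet> y = b}" by (simp add: affine_hyperplane hull_same)
  moreover have "e \<noteq> e'" using ee F(3) by auto
  ultimately show ?thesis using that ab ee by blast
qed

lemma rel_interior_facet_subset_interior_hull_insert:
  assumes pg: "polygon P" and fc: "F facet_of P" and x: "beyond F P x"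
  shows "rel_interior F \<subseteq> interior (convex hull (insert x P))"
proof -
  obtain a b where a: "a \<noteq> 0" and ah: "affine hull F = {y. a \<bullet> y = b}"
    and iP: "interior P \<subseteq> {y. a \<bullet> y < b}" and xb: "a \<bullet> x > b"
    using x unfolding beyond_def by blast
  obtain a0 b0 e e' where "F = P \<inter> {y. a0 \<bullet> y = b0}" and F: "F = closed_segment e e'" "e \<noteq> e'"
    using facet_of_polygon_segment[OF pg fc] by metis
  then have eP: "e \<in> P" "e' \<in> P" by auto
  have ae: "a \<bullet> e = b" "a \<bullet> e' = b" using ah F hull_subset[of F affine] by auto
  obtain q where q: "q \<in> interior P" using polygon_interior_nonempty[OF pg] by blast
  then have "a \<bullet> q < b" using iP by blast
  then show ?thesis
    using open_segment_subset_interior_hull_insert[OF q _ eP ae F(2) a xb] F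
    by (simp add: rel_interior_closed_segment)
qed

lemma convex_mink_diff:
  assumes "convex P" shows "convex (mink_diff P L)"
proof (rule convexI)
  fix x y :: "real^2" and u v :: real
  assume xy: "x \<in> mink_diff P L" "y \<in> mink_diff P L" and uv: "0 \<le> u" "0 \<le> v" "u + v = 1"
  have "l + (u *\<^sub>R x + v *\<^sub>R y) \<in> P" if l: "l \<in> L" for l
  proof -
    have "l + (u *\<^sub>R x + v *\<^sub>R y) = (u + v) *\<^sub>R l + (u *\<^sub>R x + v *\<^sub>R y)" using uv by simp
    also have "\<dots> = u *\<^sub>R (l + x) + v *\<^sub>R (l + y)" by (simp add: algebra_simps)
    moreover have "l + x \<in> P" "l + y \<in> P" using xy l unfolding mink_diff_def by auto
    ultimately show ?thesis using assms uv unfolding convex_def by simp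
  qed
  then show "u *\<^sub>R x + v *\<^sub>R y \<in> mink_diff P L" unfolding mink_diff_def by auto
qed

lemma mink_diff_ball_shift_in_interior:
  fixes P L :: "(real^2) set"
  assumes cvx: "convex P" and LP: "L \<subseteq> P" and r: "r > 0" "ball t r \<subseteq> mink_diff P L"
    and v: "v \<in> L" and lam: "0 < lam" "lam \<le> 1"
  shows "v + lam *\<^sub>R t \<in> interior P"
proof -
  \<comment> \<open>\<open>v + lam t\<close> is a convex combination of \<open>v \<in> P\<close> and \<open>v + t \<in> P\<close>, and so is the whole ball around it\<close>
  have "ball (v + lam *\<^sub>R t) (lam * r) \<subseteq> P"
  proof
    fix y assume y: "y \<in> ball (v + lam *\<^sub>R t) (lam * r)"
    define u where "u = t + (1/lam) *\<^sub>R (y - v - lam *\<^sub>R t)"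
    have "dist t u = (1/lam) * norm (y - v - lam *\<^sub>R t)" unfolding u_def dist_norm using lam by simp
    also have "\<dots> < (1/lam) * (lam * r)" using y lam unfolding mem_ball dist_norm
      by (intro mult_strict_left_mono) (auto simp: norm_minus_commute algebra_simps)
    also have "\<dots> = r" using lam by simp
    finally have "u \<in> mink_diff P L" using r by auto
    then have "v + u \<in> P" using v unfolding mink_diff_def by auto
    moreover have "y = (1 - lam) *\<^sub>R v + lam *\<^sub>R (v + u)" unfolding u_def using lam
      by (simp add: algebra_simps)
    moreover have "v \<in> P" using v LP by blast
    ultimately show "y \<in> P" using cvx lam unfolding convex_def by simp
  qed
  moreover have "lam * r > 0" using lam r by simp
  ultimately show ?thesis using interior_maximal[OF _ open_ball] centre_in_ball by blast
qed

lemma mink_diff_full_dim_ball: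
  assumes "convex P" "aff_dim (mink_diff P L) = 2"
  obtains t r where "r > 0" "ball t r \<subseteq> mink_diff P L"
proof -
  have "mink_diff P L \<noteq> {}" using assms(2) by auto
  then have "rel_interior (mink_diff P L) \<noteq> {}"
    using convex_mink_diff[OF assms(1)] rel_interior_eq_empty by blast
  then have "interior (mink_diff P L) \<noteq> {}"
    using assms(2) interior_rel_interior_gen[of "mink_diff P L"] by simp
  then obtain t where "t \<in> interior (mink_diff P L)" by blast
  then obtain r where "r > 0" "ball t r \<subseteq> interior (mink_diff P L)"
    using open_contains_ball open_interior by blast
  then show ?thesis using that interior_subset by blast
qed

lemma R_unimodular_copy_extreme_points:
  assumes "R_unimodular_copy Delta2 D"
  shows "finite {v. v extreme_point_of D}" "D = convex hull {v. v extreme_point_of D}"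
proof -
  obtain M c where "D = (\<lambda>y. M *v y + c) ` Delta2"
    using assms unfolding R_unimodular_copy_def R_unimodular_map_def by blast
  then have D: "D = convex hull {c, M *v axis 1 1 + c, M *v axis 2 1 + c}" by (simp add: affine_image_Delta2)
  show "finite {v. v extreme_point_of D}" unfolding D
    by (rule finite_subset[OF extreme_points_of_convex_hull]) auto
  show "D = convex hull {v. v extreme_point_of D}"
    by (rule Krein_Milman_Minkowski) (auto simp: D finite_imp_compact_convex_hull)
qed

lemma small_translate_hull_subset:
  assumes "finite V" "\<forall>v\<in>V. \<forall>\<^sub>F lam in at_right 0. v + lam *\<^sub>R t \<in> U" "convex U"
  obtains lam where "(\<lambda>y. y + lam *\<^sub>R t) ` (convex hull V) \<subseteq> U"
proof -
  have "\<forall>\<^sub>F lam in at_right 0. \<forall>v\<in>V. v + lam *\<^sub>R t \<in> U"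
    by (rule eventually_ball_finite[OF assms(1,2)])
  then obtain lam where "\<forall>v\<in>V. v + lam *\<^sub>R t \<in> U" by (rule at_right_0_witness)
  then have "convex hull ((\<lambda>y. y + lam *\<^sub>R t) ` V) \<subseteq> U" using assms(3) by (intro hull_minimal) auto
  then show ?thesis using that image_add_convex_hull by metis
qed

lemma locked_if_witness_triangle:
  assumes pg: "polygon P" and free: "R_Delta2_free P" and fc: "F facet_of P"
    and cp: "R_unimodular_copy Delta2 D" and DP: "D \<subseteq> P" and FD: "F \<inter> D \<subseteq> rel_interior F"
    and ad: "aff_dim (mink_diff P (convex hull {v. v extreme_point_of D \<and> v \<notin> F \<inter> D})) = 2"
  shows "locked F P"
  unfolding locked_def
proof (intro conjI allI impI)
  show "R_Delta2_free P" "polygon P" "F facet_of P" by fact+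
  fix x assume x: "beyond F P x"
  define C where "C = convex hull (insert x P)"
  define V where "V = {v. v extreme_point_of D}"
  define L where "L = convex hull {v. v extreme_point_of D \<and> v \<notin> F \<inter> D}"
  have cvx: "convex P" using polygon_imp_convex[OF pg] .
  have "P \<subseteq> C" unfolding C_def by (meson hull_subset subset_insertI subset_trans)
  then have iPC: "interior P \<subseteq> interior C" by (rule interior_mono)
  have relF: "rel_interior F \<subseteq> interior C"
    unfolding C_def using rel_interior_facet_subset_interior_hull_insert[OF pg fc x] .
  have VD: "V \<subseteq> D" unfolding V_def using extreme_point_of_def by auto
  have finV: "finite V" and DV: "D = convex hull V"
    unfolding V_def by (fact R_unimodular_copy_extreme_points[OF cp])+
  have LP: "L \<subseteq> P" unfolding L_def using DP cvx by (intro hull_minimal) (auto simp: extreme_point_of_def)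
  obtain t r where r: "r > 0" "ball t r \<subseteq> mink_diff P L"
    using mink_diff_full_dim_ball[OF cvx ad[folded L_def]] by blast
  \<comment> \<open>vertices on \<open>F\<close> already lie in the open set \<open>interior C\<close>; the others are pushed into \<open>interior P\<close>\<close>
  have "\<forall>v\<in>V. \<forall>\<^sub>F lam in at_right 0. v + lam *\<^sub>R t \<in> interior C"
  proof
    fix v assume v: "v \<in> V"
    show "\<forall>\<^sub>F lam in at_right 0. v + lam *\<^sub>R t \<in> interior C"
    proof (cases "v \<in> F")
      case True
      then have "v \<in> interior C" using v VD FD relF by blast
      moreover have "((\<lambda>lam. v + lam *\<^sub>R t) \<longlongrightarrow> v + 0 *\<^sub>R t) (at_right 0)" by (intro tendsto_intros)
      ultimately show ?thesis using topological_tendstoD open_interior by fastforce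
    next
      case False
      then have "v \<in> L" unfolding L_def using v unfolding V_def by (intro hull_inc) auto
      then show ?thesis
        using mink_diff_ball_shift_in_interior[OF cvx LP r] iPC
        by (intro eventually_at_rightI[of 0 1]) auto
    qed
  qed
  moreover have "convex (interior C)" unfolding C_def by (simp add: convex_interior)
  ultimately obtain lam where "(\<lambda>y. y + lam *\<^sub>R t) ` D \<subseteq> interior C"
    unfolding DV using small_translate_hull_subset[OF finV] by blast
  then show "\<exists>D. R_unimodular_copy Delta2 D \<and> D \<subseteq> interior (convex hull (insert x P))"
    using R_unimodular_copy_translate[OF cp] unfolding C_def by blast
qed

section \<open>Limits of triangles in shrinking caps\<close>

locale polygon_edge =
  fixes P :: "(real^2) set" and a :: "real^2" and b :: real and e e' :: "real^2"
  assumes P_polyhedron: "polyhedron P" and P_convex: "convex P" and P_compact: "compact P"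
    and a_nonzero: "a \<noteq> 0" and P_below: "P \<subseteq> {y. a \<bullet> y \<le> b}"
    and edge: "P \<inter> {y. a \<bullet> y = b} = closed_segment e e'" and edge_distinct: "e \<noteq> e'"
    and line_eq: "affine hull (closed_segment e e') = {y. a \<bullet> y = b}"
begin

definition apex :: "real \<Rightarrow> real^2" where
  "apex s = midpoint e e' + s *\<^sub>R a"

lemma edge_ends: "a \<bullet> e = b" "a \<bullet> e' = b" "e \<in> P" "e' \<in> P"
  using edge by (auto simp: set_eq_iff)

lemma edge_subset: "closed_segment e e' \<subseteq> P"
  using edge by blast

lemma inner_apex: "a \<bullet> apex s = b + s * (a \<bullet> a)"
  using edge_ends by (simp add: apex_def midpoint_def inner_simps algebra_simps)

lemma apex_beyond: "0 < s \<Longrightarrow> b < a \<bullet> apex s"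
  using a_nonzero by (simp add: inner_apex)

lemma halfspace_contains_line_or_apex:
  assumes PS: "P \<subseteq> {y. h \<bullet> y \<le> c}"
  shows "{y. a \<bullet> y = b} \<subseteq> {y. h \<bullet> y \<le> c} \<or> (\<forall>\<^sub>F s in at_right 0. h \<bullet> apex s < c)"
proof (cases "h \<bullet> midpoint e e' = c")
  case True
  have "h \<bullet> e \<le> c" "h \<bullet> e' \<le> c" using edge_ends PS by auto
  moreover have "h \<bullet> midpoint e e' = (h \<bullet> e + h \<bullet> e') / 2" by (simp add: midpoint_def inner_simps)
  ultimately have he: "h \<bullet> e = c" "h \<bullet> e' = c" using True by auto
  have "h \<bullet> y \<le> c" if "a \<bullet> y = b" for y
  proof -
    have "y \<in> affine hull {e, e'}" using that line_eq by (simp add: affine_hull_closed_segment)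
    then obtain u v where "u + v = 1" "y = u *\<^sub>R e + v *\<^sub>R e'" unfolding affine_hull_2 by blast
    then show ?thesis using he by (simp add: inner_simps distrib_right[symmetric])
  qed
  then show ?thesis by blast
next
  case False
  have "midpoint e e' \<in> P" using edge_subset midpoint_in_closed_segment by blast
  then have "h \<bullet> midpoint e e' < c" using PS False by auto
  moreover have "((\<lambda>s. h \<bullet> apex s) \<longlongrightarrow> h \<bullet> apex 0) (at_right 0)"
    unfolding apex_def by (intro tendsto_intros)
  ultimately show ?thesis by (simp add: apex_def order_tendstoD(2))
qed

lemma eventually_apex_segments_meet_line_in:
  "\<forall>\<^sub>F s in at_right 0. segments_meet_line_in P a b (apex s)"
proof -
  obtain H where H: "finite H" "P = \<Inter>H" "\<forall>S\<in>H. \<exists>h c. h \<noteq> 0 \<and> S = {x. h \<bullet> x \<le> c}"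
    using P_polyhedron unfolding polyhedron_def by blast
  have "\<forall>S\<in>H. \<forall>\<^sub>F s in at_right 0. apex s \<in> S \<or> {y. a \<bullet> y = b} \<subseteq> S"
  proof
    fix S assume S: "S \<in> H"
    then obtain h c where hc: "S = {x. h \<bullet> x \<le> c}" using H by blast
    then have "P \<subseteq> {y. h \<bullet> y \<le> c}" using S H by blast
    then consider "{y. a \<bullet> y = b} \<subseteq> S" | "\<forall>\<^sub>F s in at_right 0. h \<bullet> apex s < c"
      using halfspace_contains_line_or_apex[of h c] hc by blast
    then show "\<forall>\<^sub>F s in at_right 0. apex s \<in> S \<or> {y. a \<bullet> y = b} \<subseteq> S"
    proof cases
      case 2 then show ?thesis by eventually_elim (simp add: hc)
    qed simp
  qed
  then have "\<forall>\<^sub>F s in at_right 0. \<forall>S\<in>H. apex s \<in> S \<or> {y. a \<bullet> y = b} \<subseteq> S"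
    by (rule eventually_ball_finite[OF H(1)])
  then show ?thesis
  proof eventually_elim
    case (elim s)
    \<comment> \<open>each defining half-plane of \<open>P\<close> contains either the apex, hence the segment, or the whole line\<close>
    show ?case unfolding segments_meet_line_in_def
    proof (intro ballI impI)
      fix p w assume p: "p \<in> P" and w: "w \<in> closed_segment p (apex s)" and aw: "a \<bullet> w = b"
      have "w \<in> S" if S: "S \<in> H" for S
      proof (cases "apex s \<in> S")
        case True
        moreover have "convex S" "p \<in> S" using H S p by (auto simp: convex_halfspace_le)
        ultimately show ?thesis using w closed_segment_subset by blast
      next
        case False then show ?thesis using elim S aw by blast
      qed
      then show "w \<in> P" using H by blast
    qed
  qed
qed

lemma hull_insert_apex_near_P:
  assumes meet: "segments_meet_line_in P a b (apex s)" and s: "0 < s"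
    and z: "z \<in> convex hull (insert (apex s) P)"
  shows "\<exists>p\<in>P. norm (z - p) \<le> s * norm a"
proof (cases "a \<bullet> z \<le> b")
  case True
  then have "z \<in> P"
    using hull_insert_split_at_line[OF P_convex P_below edge apex_beyond[OF s] meet z] by blast
  then show ?thesis using s by (intro bexI[of _ z]) auto
next
  case False
  then have "z \<in> convex hull {e, e', apex s}"
    using hull_insert_split_at_line[OF P_convex P_below edge apex_beyond[OF s] meet z] by auto
  then obtain u v w where uvw: "0 \<le> u" "0 \<le> v" "0 \<le> w" "u + v + w = 1"
    and zz: "z = u *\<^sub>R e + v *\<^sub>R e' + w *\<^sub>R apex s"
    unfolding convex_hull_3 by blast
  define p where "p = u *\<^sub>R e + v *\<^sub>R e' + w *\<^sub>R midpoint e e'"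
  have "p \<in> convex hull {e, e', midpoint e e'}" unfolding convex_hull_3 p_def using uvw by blast
  also have "\<dots> \<subseteq> closed_segment e e'" by (intro hull_minimal) (auto simp: convex_closed_segment)
  finally have "p \<in> P" using edge_subset by blast
  have "z - p = (w * s) *\<^sub>R a" unfolding zz p_def apex_def by (simp add: algebra_simps)
  then have "norm (z - p) = w * s * norm a" using uvw s by simp
  also have "\<dots> \<le> s * norm a" using uvw s by (simp add: mult_left_le_one_le mult_le_cancel_right1)
  finally show ?thesis using \<open>p \<in> P\<close> by blast
qed

lemma interior_hull_insert_below_line:
  assumes meet: "segments_meet_line_in P a b (apex s)" and s: "0 < s"
  shows "interior (convex hull (insert (apex s) P)) \<inter> {y. a \<bullet> y < b} \<subseteq> interior P"
proof (rule interior_maximal)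
  show "interior (convex hull (insert (apex s) P)) \<inter> {y. a \<bullet> y < b} \<subseteq> P"
    using hull_insert_split_at_line[OF P_convex P_below edge apex_beyond[OF s] meet] interior_subset
    by fastforce
qed (intro open_Int open_interior open_halfspace_lt)

lemma hull_insert_apex_bounded:
  obtains R where "\<And>s. 0 \<le> s \<Longrightarrow> s \<le> 1 \<Longrightarrow> convex hull (insert (apex s) P) \<subseteq> cball 0 R"
proof -
  define K where "K = convex hull (P \<union> closed_segment (apex 0) (apex 1))"
  have "compact K" unfolding K_def by (intro compact_convex_hull compact_Un P_compact compact_segment)
  then obtain R where R: "\<forall>x\<in>K. norm x \<le> R" using compact_imp_bounded bounded_iff by blast
  have "apex s \<in> closed_segment (apex 0) (apex 1)" if "0 \<le> s" "s \<le> 1" for s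
    unfolding in_segment apex_def using that by (auto intro!: exI[of _ s] simp: algebra_simps)
  then have "convex hull (insert (apex s) P) \<subseteq> K" if "0 \<le> s" "s \<le> 1" for s
    unfolding K_def using that by (intro hull_mono) auto
  then show ?thesis using that[of R] R by fastforce
qed

end

lemma eventually_shift_into_open_segment:
  fixes g g' :: "'a::euclidean_space"
  assumes gg: "g \<noteq> g'" and K: "compact K" "K \<subseteq> closed_segment g g'" "g' \<notin> K"
  shows "\<forall>\<^sub>F mu in at_right 0. \<forall>y\<in>K. y + mu *\<^sub>R (g' - g) \<in> open_segment g g'"
proof (cases "K = {}")
  case False
  define f where "f = g' - g"
  have ff: "f \<bullet> f > 0" unfolding f_def using gg by simp
  define phi where "phi y = ((y - g) \<bullet> f) / (f \<bullet> f)" for y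
  have param: "\<exists>sg. y = g + sg *\<^sub>R f \<and> 0 \<le> sg \<and> sg \<le> 1 \<and> phi y = sg" if "y \<in> K" for y
  proof -
    have "y \<in> closed_segment g g'" using that K(2) by blast
    then obtain sg where sg: "0 \<le> sg" "sg \<le> 1" "y = (1 - sg) *\<^sub>R g + sg *\<^sub>R g'"
      unfolding in_segment by blast
    then have "y = g + sg *\<^sub>R f" unfolding f_def by (simp add: algebra_simps)
    moreover from this have "phi y = sg" unfolding phi_def using ff by (simp add: inner_simps)
    ultimately show ?thesis using sg by blast
  qed
  have "continuous_on K phi" unfolding phi_def using ff by (intro continuous_intros) auto
  then obtain ys where ys: "ys \<in> K" "\<forall>y\<in>K. phi y \<le> phi ys"
    using continuous_attains_sup[OF K(1) False] by blast
  obtain ss where ss: "ys = g + ss *\<^sub>R f" "ss \<le> 1" "phi ys = ss" using param[OF ys(1)] by blast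
  have "ss \<noteq> 1" using ss ys(1) K(3) unfolding f_def by auto
  then have "ss < 1" using ss by simp
  show ?thesis
  proof (rule eventually_at_rightI[of 0 "1 - ss"], intro ballI)
    fix mu y assume mu: "mu \<in> {0<..<1 - ss}" and y: "y \<in> K"
    obtain sg where sg: "y = g + sg *\<^sub>R f" "0 \<le> sg" "phi y = sg" using param[OF y] by blast
    have "sg \<le> ss" using ys(2) y sg(3) ss(3) by metis
    then have "0 < sg + mu" "sg + mu < 1" using sg(2) mu by auto
    moreover have "y + mu *\<^sub>R (g' - g) = (1 - (sg + mu)) *\<^sub>R g + (sg + mu) *\<^sub>R g'"
      unfolding sg(1) f_def by (simp add: algebra_simps)
    ultimately show "y + mu *\<^sub>R (g' - g) \<in> open_segment g g'"
      unfolding in_segment using gg by blast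
  qed (use \<open>ss < 1\<close> in simp)
qed simp

lemma aff_dim_mink_diff_hull:
  fixes P :: "(real^2) set"
  assumes cvx: "convex P" and W: "finite W" and u: "\<forall>w\<in>W. w + u \<in> interior P"
  shows "aff_dim (mink_diff P (convex hull W)) = 2"
proof -
  define U where "U = (\<Inter>w\<in>W. (\<lambda>u. w + u) -` interior P)"
  have "open U" unfolding U_def using W
    by (intro open_INT ballI continuous_open_vimage open_interior) (auto intro: continuous_intros)
  moreover have "u \<in> U" unfolding U_def using u by auto
  moreover have "U \<subseteq> mink_diff P (convex hull W)"
  proof
    fix u' assume "u' \<in> U"
    then have "(\<lambda>y. y + u') ` W \<subseteq> P" unfolding U_def using interior_subset by (auto simp: add.commute)
    then have "convex hull ((\<lambda>y. y + u') ` W) \<subseteq> P" using cvx by (rule hull_minimal)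
    then show "u' \<in> mink_diff P (convex hull W)" unfolding mink_diff_def image_add_convex_hull by blast
  qed
  ultimately have "interior (mink_diff P (convex hull W)) \<noteq> {}" using interior_maximal by blast
  then show ?thesis using aff_dim_nonempty_interior by fastforce
qed

text \<open>
  \<open>convex hull V\<close> is the limit of the copies \<open>convex hull V + t n\<close> lying in the caps over the
  apexes \<open>apex (s n)\<close>; no translate of it fits into \<open>interior P\<close>.
\<close>

locale cap_limit = polygon_edge +
  fixes V :: "(real^2) set" and t :: "nat \<Rightarrow> real^2" and s :: "nat \<Rightarrow> real"
  assumes V_finite: "finite V"
    and s_pos: "\<And>n. 0 < s n" and s_tendsto: "s \<longlonglongrightarrow> 0"
    and s_meet: "\<And>n. segments_meet_line_in P a b (apex (s n))"
    and t_tendsto: "t \<longlonglongrightarrow> 0"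
    and shift_in_cap: "\<And>n y. y \<in> convex hull V \<Longrightarrow>
          y + t n \<in> interior (convex hull (insert (apex (s n)) P))"
    and no_translate_in_interior: "\<And>u. \<not> (\<forall>v\<in>V. v + u \<in> interior P)"
begin

abbreviation cap :: "nat \<Rightarrow> (real^2) set" where
  "cap n \<equiv> convex hull (insert (apex (s n)) P)"

lemma hull_subset_P: "convex hull V \<subseteq> P"
proof
  fix y assume y: "y \<in> convex hull V"
  have "\<forall>n. \<exists>p\<in>P. norm ((y + t n) - p) \<le> s n * norm a"
    using hull_insert_apex_near_P[OF s_meet s_pos] shift_in_cap[OF y] interior_subset by blast
  then obtain p where p: "\<And>n. p n \<in> P" "\<And>n. norm ((y + t n) - p n) \<le> s n * norm a" by metis
  have lim0: "(\<lambda>n. s n * norm a) \<longlonglongrightarrow> 0" using tendsto_mult_left_zero[OF s_tendsto] .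
  have "(\<lambda>n. (y + t n) - p n) \<longlonglongrightarrow> 0"
    by (rule Lim_null_comparison[OF always_eventually lim0]) (use p(2) in blast)
  moreover have "(\<lambda>n. y + t n) \<longlonglongrightarrow> y" using tendsto_add[OF tendsto_const t_tendsto] by simp
  ultimately have "(\<lambda>n. (y + t n) - ((y + t n) - p n)) \<longlonglongrightarrow> y - 0" by (intro tendsto_diff)
  then have "p \<longlonglongrightarrow> y" by simp
  then show "y \<in> P" using P_compact p(1) by (intro Lim_in_closed_set[of P p]) (auto simp: compact_imp_closed)
qed

lemma hull_below: "y \<in> convex hull V \<Longrightarrow> a \<bullet> y \<le> b"
  using hull_subset_P P_below by auto

lemma eventually_shift_in_interior:
  assumes v: "v \<in> convex hull V" "a \<bullet> v < b"
  shows "\<forall>\<^sub>F n in sequentially. v + t n \<in> interior P"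
proof -
  have "(\<lambda>n. a \<bullet> (v + t n)) \<longlonglongrightarrow> a \<bullet> (v + 0)" by (intro tendsto_intros t_tendsto)
  then have "\<forall>\<^sub>F n in sequentially. a \<bullet> (v + t n) < b" using v(2) by (simp add: order_tendstoD(2))
  then show ?thesis
    by eventually_elim (use interior_hull_insert_below_line[OF s_meet s_pos] shift_in_cap[OF v(1)] in blast)
qed

lemma vertex_on_line: "\<exists>v\<in>V. a \<bullet> v = b"
proof (rule ccontr)
  assume "\<not> ?thesis"
  then have "\<forall>v\<in>V. \<forall>\<^sub>F n in sequentially. v + t n \<in> interior P"
    using eventually_shift_in_interior hull_below hull_inc by (metis order_less_le)
  then have "\<forall>\<^sub>F n in sequentially. \<forall>v\<in>V. v + t n \<in> interior P"
    by (rule eventually_ball_finite[OF V_finite])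
  then show False using no_translate_in_interior eventually_sequentially by auto
qed

lemma shift_outward: "0 < a \<bullet> t n"
proof (rule ccontr)
  assume nonpos: "\<not> 0 < a \<bullet> t n"
  \<comment> \<open>otherwise moving the copy slightly against \<open>a\<close> would put it into \<open>interior P\<close>\<close>
  have "\<forall>v\<in>V. \<forall>\<^sub>F rho in at_right 0. v + (t n - rho *\<^sub>R a) \<in> interior (cap n)"
  proof
    fix v assume "v \<in> V"
    then have "v + (t n - 0 *\<^sub>R a) \<in> interior (cap n)" using shift_in_cap[OF hull_inc] by simp
    moreover have "((\<lambda>rho. v + (t n - rho *\<^sub>R a)) \<longlongrightarrow> v + (t n - 0 *\<^sub>R a)) (at_right 0)"
      by (intro tendsto_intros)
    ultimately show "\<forall>\<^sub>F rho in at_right 0. v + (t n - rho *\<^sub>R a) \<in> interior (cap n)"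
      using topological_tendstoD open_interior by fastforce
  qed
  then have "\<forall>\<^sub>F rho in at_right 0. \<forall>v\<in>V. v + (t n - rho *\<^sub>R a) \<in> interior (cap n)"
    by (rule eventually_ball_finite[OF V_finite])
  then obtain rho where rho: "0 < rho" "\<forall>v\<in>V. v + (t n - rho *\<^sub>R a) \<in> interior (cap n)"
    by (rule at_right_0_witness)
  have "v + (t n - rho *\<^sub>R a) \<in> interior P" if v: "v \<in> V" for v
  proof -
    have "a \<bullet> v \<le> b" using hull_below[OF hull_inc[OF v]] .
    moreover have "0 < rho * (a \<bullet> a)" using rho a_nonzero by simp
    ultimately have "a \<bullet> (v + (t n - rho *\<^sub>R a)) < b" using nonpos by (simp add: inner_simps)
    moreover have "v + (t n - rho *\<^sub>R a) \<in> interior (cap n)" using rho(2) v by blast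
    ultimately show ?thesis using interior_hull_insert_below_line[OF s_meet s_pos, of n] by blast
  qed
  then show False using no_translate_in_interior by blast
qed

lemma shift_decomposition:
  assumes gg: "(g = e \<and> g' = e') \<or> (g = e' \<and> g' = e)" and gD: "g \<in> convex hull V"
  shows "\<exists>k h. t n = k *\<^sub>R (g' - g) + h *\<^sub>R a \<and> k > 0 \<and> 0 \<le> h \<and> h \<le> 2 * s n * k"
proof -
  have ag: "a \<bullet> g = b" "a \<bullet> g' = b" using gg edge_ends by auto
  have az: "a \<bullet> (g + t n) > b" using ag shift_outward[of n] by (simp add: inner_simps)
  have "g + t n \<in> cap n" using shift_in_cap[OF gD] interior_subset by blast
  then have "g + t n \<in> convex hull {e, e', apex (s n)}"
    using hull_insert_split_at_line[OF P_convex P_below edge apex_beyond[OF s_pos] s_meet] az by auto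
  moreover have "{e, e', apex (s n)} = {g, g', apex (s n)}" using gg by auto
  moreover have "apex (s n) = midpoint g g' + s n *\<^sub>R a" using gg midpoint_sym unfolding apex_def by metis
  ultimately show ?thesis using above_edge_decomposition[OF _ _ ag az s_pos] by simp
qed

lemma not_both_edge_ends: "\<not> (e \<in> convex hull V \<and> e' \<in> convex hull V)"
proof
  assume both: "e \<in> convex hull V \<and> e' \<in> convex hull V"
  \<comment> \<open>the shift \<open>t 0\<close> would have to point strictly towards both ends of the edge\<close>
  obtain k h where 1: "t 0 = k *\<^sub>R (e' - e) + h *\<^sub>R a" "k > 0" using shift_decomposition both by blast
  obtain k' h' where 2: "t 0 = k' *\<^sub>R (e - e') + h' *\<^sub>R a" "k' > 0" using shift_decomposition both by blast
  have fa: "(e' - e) \<bullet> a = 0" using edge_ends by (simp add: inner_simps inner_commute)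
  have "(e' - e) \<bullet> t 0 = k * ((e' - e) \<bullet> (e' - e))" unfolding 1 using fa by (simp add: inner_simps)
  moreover have "(e' - e) \<bullet> t 0 = - k' * ((e' - e) \<bullet> (e' - e))"
    unfolding 2 using fa by (simp add: inner_simps inner_commute algebra_simps)
  ultimately have "(k + k') * ((e' - e) \<bullet> (e' - e)) = 0" by (simp add: algebra_simps)
  then show False using 1 2 edge_distinct by simp
qed

lemma tight_halfspace_slope_nonpos:
  assumes gg: "(g = e \<and> g' = e') \<or> (g = e' \<and> g' = e)" and gD: "g \<in> convex hull V"
    and v: "v \<in> convex hull V" "a \<bullet> v < b" and PS: "P \<subseteq> {x. h \<bullet> x \<le> c}" and hv: "h \<bullet> v = c"
  shows "h \<bullet> (g' - g) \<le> 0"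
proof (rule ccontr)
  assume "\<not> ?thesis"
  then have pos: "h \<bullet> (g' - g) > 0" by simp
  \<comment> \<open>\<open>v + t n \<in> P\<close> forces \<open>h \<bullet> t n \<le> 0\<close>, while \<open>t n\<close> is a positive multiple of \<open>g' - g\<close> up to \<open>O(s n)\<close>\<close>
  have "\<forall>\<^sub>F n in sequentially. h \<bullet> (g' - g) \<le> 2 * s n * \<bar>h \<bullet> a\<bar>"
    using eventually_shift_in_interior[OF v]
  proof eventually_elim
    case (elim n)
    then have "h \<bullet> t n \<le> 0" using PS hv interior_subset by (force simp: inner_simps)
    moreover obtain k l where kl: "t n = k *\<^sub>R (g' - g) + l *\<^sub>R a" "k > 0" "0 \<le> l" "l \<le> 2 * s n * k"
      using shift_decomposition[OF gg gD] by blast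
    ultimately have "k * (h \<bullet> (g' - g)) \<le> - (l * (h \<bullet> a))" by (simp add: inner_simps)
    also have "\<dots> \<le> l * \<bar>h \<bullet> a\<bar>" using kl(3)
      by (metis abs_ge_minus_self abs_mult abs_of_nonneg minus_mult_right mult_left_mono)
    also have "\<dots> \<le> (2 * s n * k) * \<bar>h \<bullet> a\<bar>" using kl(4) by (intro mult_right_mono) auto
    finally have "k * (h \<bullet> (g' - g)) \<le> k * (2 * s n * \<bar>h \<bullet> a\<bar>)" by (simp add: algebra_simps)
    then show ?case using kl(2) by simp
  qed
  moreover have "(\<lambda>n. 2 * s n * \<bar>h \<bullet> a\<bar>) \<longlonglongrightarrow> 2 * 0 * \<bar>h \<bullet> a\<bar>" by (intro tendsto_intros s_tendsto)
  then have "\<forall>\<^sub>F n in sequentially. 2 * s n * \<bar>h \<bullet> a\<bar> < h \<bullet> (g' - g)"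
    using pos by (simp add: order_tendstoD(2))
  ultimately have "\<forall>\<^sub>F n in sequentially. False" by eventually_elim simp
  then show False by simp
qed

lemma eventually_slide_vertex_in_P:
  assumes gg: "(g = e \<and> g' = e') \<or> (g = e' \<and> g' = e)" and gD: "g \<in> convex hull V"
    and v: "v \<in> V" "a \<bullet> v < b"
  shows "\<forall>\<^sub>F mu in at_right 0. v + mu *\<^sub>R (g' - g) \<in> P"
proof -
  obtain H where H: "finite H" "P = \<Inter>H" "\<forall>S\<in>H. \<exists>h c. h \<noteq> 0 \<and> S = {x. h \<bullet> x \<le> c}"
    using P_polyhedron unfolding polyhedron_def by blast
  have vD: "v \<in> convex hull V" using v(1) by (rule hull_inc)
  have "\<forall>S\<in>H. \<forall>\<^sub>F mu in at_right 0. v + mu *\<^sub>R (g' - g) \<in> S"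
  proof
    fix S assume S: "S \<in> H"
    then obtain h c where hc: "S = {x. h \<bullet> x \<le> c}" using H by blast
    have PS: "P \<subseteq> {x. h \<bullet> x \<le> c}" using S H hc by blast
    then have "h \<bullet> v \<le> c" using hull_subset_P vD by blast
    then consider "h \<bullet> v = c" | "h \<bullet> v < c" by linarith
    then show "\<forall>\<^sub>F mu in at_right 0. v + mu *\<^sub>R (g' - g) \<in> S"
    proof cases
      case 1
      then have "h \<bullet> (g' - g) \<le> 0" using tight_halfspace_slope_nonpos[OF gg gD vD v(2) PS] by blast
      then have "v + mu *\<^sub>R (g' - g) \<in> S" if "0 < mu" for mu
        using 1 that hc by (simp add: inner_simps mult_nonneg_nonpos)
      then show ?thesis by (intro eventually_at_rightI[of 0 1]) auto
    next
      case 2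
      have "((\<lambda>mu. h \<bullet> (v + mu *\<^sub>R (g' - g))) \<longlongrightarrow> h \<bullet> (v + 0 *\<^sub>R (g' - g))) (at_right 0)"
        by (intro tendsto_intros)
      then have "\<forall>\<^sub>F mu in at_right 0. h \<bullet> (v + mu *\<^sub>R (g' - g)) < c"
        using 2 by (simp add: order_tendstoD(2))
      then show ?thesis unfolding hc by eventually_elim simp
    qed
  qed
  then have "\<forall>\<^sub>F mu in at_right 0. \<forall>S\<in>H. v + mu *\<^sub>R (g' - g) \<in> S"
    by (rule eventually_ball_finite[OF H(1)])
  then show ?thesis unfolding H(2) by simp
qed

lemma slide_along_edge:
  assumes gg: "(g = e \<and> g' = e') \<or> (g = e' \<and> g' = e)" and g'D: "g' \<notin> convex hull V"
  obtains mu where "\<forall>v\<in>V. v + mu *\<^sub>R (g' - g) \<in> P"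
    "\<forall>y\<in>convex hull V. a \<bullet> y = b \<longrightarrow> y + mu *\<^sub>R (g' - g) \<in> open_segment e e'"
proof -
  define K where "K = convex hull V \<inter> {y. a \<bullet> y = b}"
  have seg: "closed_segment g g' = closed_segment e e'" "open_segment g g' = open_segment e e'"
    using gg closed_segment_commute open_segment_commute by blast+
  have KF: "K \<subseteq> closed_segment g g'" unfolding K_def seg using hull_subset_P edge by blast
  show ?thesis
  proof (cases "g \<in> convex hull V")
    case False
    then have "K \<subseteq> open_segment g g'" using KF g'D unfolding K_def open_segment_def by blast
    show ?thesis
    proof (rule that[of 0])
      show "\<forall>v\<in>V. v + 0 *\<^sub>R (g' - g) \<in> P" using hull_subset[of V convex] hull_subset_P by auto
      show "\<forall>y\<in>convex hull V. a \<bullet> y = b \<longrightarrow> y + 0 *\<^sub>R (g' - g) \<in> open_segment e e'"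
        using \<open>K \<subseteq> open_segment g g'\<close> seg(2) unfolding K_def by auto
    qed
  next
    case gD: True
    have gne: "g \<noteq> g'" using gg edge_distinct by blast
    have cK: "compact K" unfolding K_def
      by (intro compact_Int_closed finite_imp_compact_convex_hull V_finite closed_hyperplane)
    have g'K: "g' \<notin> K" using g'D unfolding K_def by blast
    have "\<forall>\<^sub>F mu in at_right 0. \<forall>y\<in>K. y + mu *\<^sub>R (g' - g) \<in> open_segment g g'"
      by (rule eventually_shift_into_open_segment[OF gne cK KF g'K])
    moreover have "\<forall>\<^sub>F mu in at_right 0. \<forall>v\<in>{v\<in>V. a \<bullet> v < b}. v + mu *\<^sub>R (g' - g) \<in> P"
      using eventually_slide_vertex_in_P[OF gg gD] V_finite by (intro eventually_ball_finite) auto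
    ultimately have "\<forall>\<^sub>F mu in at_right 0. (\<forall>y\<in>K. y + mu *\<^sub>R (g' - g) \<in> open_segment g g') \<and>
        (\<forall>v\<in>{v\<in>V. a \<bullet> v < b}. v + mu *\<^sub>R (g' - g) \<in> P)"
      by (rule eventually_conj)
    then obtain mu where mu: "\<forall>y\<in>K. y + mu *\<^sub>R (g' - g) \<in> open_segment e e'"
      "\<forall>v\<in>{v\<in>V. a \<bullet> v < b}. v + mu *\<^sub>R (g' - g) \<in> P"
      unfolding seg(2) by (rule at_right_0_witness) blast
    have "v + mu *\<^sub>R (g' - g) \<in> P" if v: "v \<in> V" for v
    proof (cases "a \<bullet> v < b")
      case False
      then have "v \<in> K" using hull_below[OF hull_inc[OF v]] hull_inc[OF v] unfolding K_def by simp
      then show ?thesis using mu(1) edge unfolding open_segment_def by blast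
    qed (use mu(2) v in blast)
    then show ?thesis using that mu(1) unfolding K_def by blast
  qed
qed

lemma translate_extreme_points_below_line:
  assumes tau: "\<forall>y\<in>convex hull V. a \<bullet> y = b \<longrightarrow> y + tau \<in> open_segment e e'"
  shows "{v. v extreme_point_of ((\<lambda>y. y + tau) ` (convex hull V)) \<and>
      v \<notin> closed_segment e e' \<inter> (\<lambda>y. y + tau) ` (convex hull V)} \<subseteq> (\<lambda>y. y + tau) ` {v\<in>V. a \<bullet> v < b}"
proof
  fix z assume z: "z \<in> {v. v extreme_point_of ((\<lambda>y. y + tau) ` (convex hull V)) \<and>
      v \<notin> closed_segment e e' \<inter> (\<lambda>y. y + tau) ` (convex hull V)}"
  then have "z \<in> (\<lambda>y. y + tau) ` V"
    using extreme_points_of_convex_hull[of "(\<lambda>y. y + tau) ` V"] by (auto simp: image_add_convex_hull)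
  then obtain w where w: "w \<in> V" "z = w + tau" by blast
  have "a \<bullet> w \<noteq> b"
  proof
    assume "a \<bullet> w = b"
    then have "z \<in> open_segment e e'" using tau hull_inc[OF w(1)] w(2) by blast
    moreover have "z \<in> (\<lambda>y. y + tau) ` (convex hull V)" using z extreme_point_of_def by blast
    ultimately show False using z segment_open_subset_closed by blast
  qed
  then show "z \<in> (\<lambda>y. y + tau) ` {v\<in>V. a \<bullet> v < b}" using w hull_below[OF hull_inc[OF w(1)]] by auto
qed

lemma aff_dim_mink_diff_translate_below_line:
  assumes L: "L \<subseteq> (\<lambda>y. y + tau) ` {v\<in>V. a \<bullet> v < b}"
  shows "aff_dim (mink_diff P (convex hull L)) = 2"
proof -
  define W where "W = {v\<in>V. a \<bullet> v < b}"
  have "finite W" unfolding W_def using V_finite by simp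
  then have "\<forall>\<^sub>F n in sequentially. \<forall>w\<in>W. w + t n \<in> interior P"
    by (rule eventually_ball_finite) (use eventually_shift_in_interior[OF hull_inc] in \<open>auto simp: W_def\<close>)
  then obtain n where "\<forall>w\<in>W. w + t n \<in> interior P" using eventually_sequentially by auto
  then have "\<forall>z\<in>L. z + (t n - tau) \<in> interior P" using L unfolding W_def by (auto simp: algebra_simps)
  moreover have "finite L" using L \<open>finite W\<close> unfolding W_def by (meson finite_imageI finite_subset)
  ultimately show ?thesis using aff_dim_mink_diff_hull[OF P_convex] by blast
qed

lemma translate_witness:
  obtains tau where "(\<lambda>y. y + tau) ` (convex hull V) \<subseteq> P"
    "closed_segment e e' \<inter> (\<lambda>y. y + tau) ` (convex hull V) \<noteq> {}"
    "closed_segment e e' \<inter> (\<lambda>y. y + tau) ` (convex hull V) \<subseteq> open_segment e e'"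
    "aff_dim (mink_diff P (convex hull {v. v extreme_point_of ((\<lambda>y. y + tau) ` (convex hull V)) \<and>
        v \<notin> closed_segment e e' \<inter> (\<lambda>y. y + tau) ` (convex hull V)})) = 2"
proof -
  obtain g g' where gg: "(g = e \<and> g' = e') \<or> (g = e' \<and> g' = e)" and g'D: "g' \<notin> convex hull V"
    using not_both_edge_ends by blast
  obtain mu where mu: "\<forall>v\<in>V. v + mu *\<^sub>R (g' - g) \<in> P"
    "\<forall>y\<in>convex hull V. a \<bullet> y = b \<longrightarrow> y + mu *\<^sub>R (g' - g) \<in> open_segment e e'"
    using slide_along_edge[OF gg g'D] by blast
  define tau where "tau = mu *\<^sub>R (g' - g)"
  define D where "D = (\<lambda>y. y + tau) ` (convex hull V)"
  have atau: "a \<bullet> tau = 0" unfolding tau_def using gg edge_ends by (auto simp: inner_simps)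
  have "D = convex hull ((\<lambda>y. y + tau) ` V)" unfolding D_def image_add_convex_hull ..
  then have DP: "D \<subseteq> P" using mu(1) P_convex unfolding tau_def by (simp add: hull_minimal image_subset_iff)
  have meets: "closed_segment e e' \<inter> D \<noteq> {}"
  proof -
    obtain v where v: "v \<in> V" "a \<bullet> v = b" using vertex_on_line by blast
    then have "v + tau \<in> open_segment e e'" using mu(2) hull_inc[OF v(1)] unfolding tau_def by blast
    moreover have "v + tau \<in> D" unfolding D_def using hull_inc[OF v(1)] by blast
    ultimately show ?thesis using segment_open_subset_closed by blast
  qed
  have inside: "closed_segment e e' \<inter> D \<subseteq> open_segment e e'"
  proof
    fix z assume z: "z \<in> closed_segment e e' \<inter> D"
    then obtain y where y: "y \<in> convex hull V" "z = y + tau" unfolding D_def by blast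
    have "a \<bullet> z = b" using z edge by blast
    then have "a \<bullet> y = b" using y(2) atau by (simp add: inner_simps)
    then show "z \<in> open_segment e e'" using mu(2) y unfolding tau_def by blast
  qed
  have "aff_dim (mink_diff P (convex hull {v. v extreme_point_of D \<and> v \<notin> closed_segment e e' \<inter> D})) = 2"
    unfolding D_def using translate_extreme_points_below_line mu(2) unfolding tau_def
    by (intro aff_dim_mink_diff_translate_below_line) blast
  with DP meets inside show ?thesis unfolding D_def by (rule that)
qed

end

lemma finite_bounded_int_matrices: "finite {M::real^2^2. \<forall>i j. M$i$j \<in> \<int> \<and> \<bar>M$i$j\<bar> \<le> K}"
proof -
  define S where "S = {r::real. r \<in> \<int> \<and> \<bar>r\<bar> \<le> K}"
  have "S \<subseteq> of_int ` {-\<lceil>K\<rceil>..\<lceil>K\<rceil>}"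
  proof
    fix r assume "r \<in> S"
    then obtain k where k: "r = of_int k" "\<bar>of_int k\<bar> \<le> K" unfolding S_def by (auto elim: Ints_cases)
    then have kK: "real_of_int k \<le> K" "- real_of_int k \<le> K" by (auto simp: abs_le_iff)
    have "k \<le> \<lceil>K\<rceil>" "-k \<le> \<lceil>K\<rceil>" unfolding le_ceiling_iff using kK by simp_all
    then show "r \<in> of_int ` {-\<lceil>K\<rceil>..\<lceil>K\<rceil>}" using k by auto
  qed
  then have "finite S" by (rule finite_subset) simp
  let ?g = "\<lambda>(p::real, q::real, r::real, u::real). (vector [vector [p, q], vector [r, u]] :: real^2^2)"
  have "{M::real^2^2. \<forall>i j. M$i$j \<in> \<int> \<and> \<bar>M$i$j\<bar> \<le> K} \<subseteq> ?g ` (S \<times> S \<times> S \<times> S)"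
  proof
    fix M :: "real^2^2" assume M: "M \<in> {M. \<forall>i j. M$i$j \<in> \<int> \<and> \<bar>M$i$j\<bar> \<le> K}"
    have "M = ?g (M$1$1, M$1$2, M$2$1, M$2$2)" by (simp add: vec_eq_iff forall_2 vector_2)
    then show "M \<in> ?g ` (S \<times> S \<times> S \<times> S)" using M unfolding S_def by blast
  qed
  then show ?thesis by (rule finite_subset) (use \<open>finite S\<close> in auto)
qed

lemma affine_image_Delta2_in_cball:
  assumes "(\<lambda>y. (M::real^2^2) *v y + c) ` Delta2 \<subseteq> cball 0 R"
  shows "c \<in> cball 0 R" "\<bar>M $ i $ j\<bar> \<le> 2 * R"
proof -
  have "0 \<in> Delta2" "axis j 1 \<in> Delta2" unfolding Delta2_def using exhaust_2[of j] by (auto intro: hull_inc)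
  then have c: "c \<in> cball 0 R" and "M *v axis j 1 + c \<in> cball 0 R" using assms by auto
  then have "norm (M *v axis j 1) \<le> 2 * R"
    using norm_triangle_ineq4[of "M *v axis j 1 + c" c] by simp
  then show "\<bar>M $ i $ j\<bar> \<le> 2 * R"
    using component_le_norm_cart[of "M *v axis j 1" i] by (simp add: matrix_vector_mult_basis column_def)
  show "c \<in> cball 0 R" by (fact c)
qed

lemma integer_affine_maps_convergent_subseq:
  fixes Mf :: "nat \<Rightarrow> real^2^2" and cf :: "nat \<Rightarrow> real^2"
  assumes int: "\<And>n. \<forall>i j. Mf n $ i $ j \<in> \<int>"
    and bounded: "\<And>n. (\<lambda>y. Mf n *v y + cf n) ` Delta2 \<subseteq> cball 0 R"
  obtains r M0 c0 where "strict_mono r" "\<And>n. Mf (r n) = M0" "(cf \<circ> r) \<longlonglongrightarrow> c0"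
proof -
  have "range Mf \<subseteq> {M. \<forall>i j. M$i$j \<in> \<int> \<and> \<bar>M$i$j\<bar> \<le> 2 * R}"
    using int affine_image_Delta2_in_cball(2)[OF bounded] by blast
  then have "finite (range Mf)" using finite_bounded_int_matrices finite_subset by blast
  then obtain n0 where "infinite {n. Mf n = Mf n0}"
    using pigeonhole_infinite[of "UNIV :: nat set" Mf] by auto
  then obtain r1 :: "nat \<Rightarrow> nat" where r1: "strict_mono r1" "\<And>n. Mf (r1 n) = Mf n0"
    using infinite_enumerate by blast
  obtain c0 r2 where r2: "strict_mono r2" "((cf \<circ> r1) \<circ> r2) \<longlonglongrightarrow> c0"
    using compact_imp_seq_compact[OF compact_cball, of 0 R] affine_image_Delta2_in_cball(1)[OF bounded]
    unfolding seq_compact_def by (metis comp_apply)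
  show ?thesis
    using that[of "r1 \<circ> r2" "Mf n0" c0] strict_mono_o[OF r1(1) r2(1)] r1(2) r2(2) by (simp add: o_assoc)
qed

context polygon_edge
begin

lemma apex_sequence:
  obtains s where "\<And>n. 0 < s n" "\<And>n. s n \<le> 1" "s \<longlonglongrightarrow> 0"
    "\<And>n. segments_meet_line_in P a b (apex (s n))"
proof -
  obtain d where d: "0 < d" "\<forall>s>0. s < d \<longrightarrow> segments_meet_line_in P a b (apex s)"
    using eventually_apex_segments_meet_line_in unfolding eventually_at_right_field by blast
  define s where "s n = min d 1 / real (n + 2)" for n
  have m: "0 < min d 1" "min d 1 \<le> d" "min d 1 \<le> 1" using d(1) by auto
  have "0 < s n \<and> s n < d \<and> s n \<le> 1" for n
  proof -
    have "s n \<le> min d 1 / 2" unfolding s_def using m by (intro divide_left_mono) auto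
    moreover have "0 < s n" unfolding s_def using m by simp
    ultimately show ?thesis using m by linarith
  qed
  moreover have "s \<longlonglongrightarrow> 0"
    unfolding s_def using LIMSEQ_ignore_initial_segment[OF lim_const_over_n[of "min d 1"], of 2]
    by (simp add: add.commute)
  ultimately show ?thesis using that d(2) by blast
qed

lemma cap_limit_if_locked:
  assumes free: "\<And>D. R_unimodular_copy Delta2 D \<Longrightarrow> \<not> D \<subseteq> interior P"
    and lk: "\<And>x. b < a \<bullet> x \<Longrightarrow> \<exists>D. R_unimodular_copy Delta2 D \<and> D \<subseteq> interior (convex hull (insert x P))"
  obtains M0 c0 t s where "\<forall>i j. M0$i$j \<in> \<int>" "\<bar>det M0\<bar> = 1"
    "cap_limit P a b e e' {c0, M0 *v axis 1 1 + c0, M0 *v axis 2 1 + c0} t s"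
proof -
  obtain s where s: "\<And>n. 0 < s n" "\<And>n. s n \<le> 1" "s \<longlonglongrightarrow> 0"
    "\<And>n. segments_meet_line_in P a b (apex (s n))" by (rule apex_sequence) blast
  have "\<forall>n. \<exists>M c. (\<forall>i j. M$i$j \<in> \<int>) \<and> \<bar>det M\<bar> = 1 \<and>
      (\<lambda>y. M *v y + c) ` Delta2 \<subseteq> interior (convex hull (insert (apex (s n)) P))"
    using lk apex_beyond[OF s(1)] unfolding R_unimodular_copy_def R_unimodular_map_def by blast
  then obtain Mf cf where Mf: "\<And>n. \<forall>i j. Mf n $i$j \<in> \<int>" "\<And>n. \<bar>det (Mf n)\<bar> = 1"
    and cap: "\<And>n. (\<lambda>y. Mf n *v y + cf n) ` Delta2 \<subseteq> interior (convex hull (insert (apex (s n)) P))"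
    by metis
  obtain R where R: "\<And>n. convex hull (insert (apex (s n)) P) \<subseteq> cball 0 R"
    using hull_insert_apex_bounded s(1,2) less_imp_le by metis
  have "(\<lambda>y. Mf n *v y + cf n) ` Delta2 \<subseteq> cball 0 R" for n
    using cap[of n] R[of n] interior_subset by blast
  then obtain r M0 c0 where r: "strict_mono r" "\<And>n. Mf (r n) = M0" "(cf \<circ> r) \<longlonglongrightarrow> c0"
    using integer_affine_maps_convergent_subseq Mf(1) by blast
  let ?V = "{c0, M0 *v axis 1 1 + c0, M0 *v axis 2 1 + c0}"
  have "cap_limit P a b e e' ?V (\<lambda>n. cf (r n) - c0) (s \<circ> r)"
  proof (unfold_locales)
    show "finite ?V" "\<And>n. 0 < (s \<circ> r) n" "\<And>n. segments_meet_line_in P a b (apex ((s \<circ> r) n))"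
      using s by auto
    show "(s \<circ> r) \<longlonglongrightarrow> 0" using LIMSEQ_subseq_LIMSEQ[OF s(3) r(1)] .
    show "(\<lambda>n. cf (r n) - c0) \<longlonglongrightarrow> 0" using tendsto_diff[OF r(3) tendsto_const[of c0]] by (simp add: o_def)
    have "(\<lambda>y. y + (cf (r n) - c0)) ` (convex hull ?V) = (\<lambda>y. Mf (r n) *v y + cf (r n)) ` Delta2" for n
      unfolding affine_image_Delta2[symmetric] translate_affine_image r(2) by simp
    then show "y + (cf (r n) - c0) \<in> interior (convex hull (insert (apex ((s \<circ> r) n)) P))"
      if "y \<in> convex hull ?V" for n y
      using that cap[of "r n"] by auto
    show "\<not> (\<forall>v\<in>?V. v + u \<in> interior P)" for u
    proof
      assume "\<forall>v\<in>?V. v + u \<in> interior P"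
      then have "convex hull ((\<lambda>y. y + u) ` ?V) \<subseteq> interior P"
        by (intro hull_minimal) (auto simp: convex_interior P_convex)
      then have "(\<lambda>y. M0 *v y + (c0 + u)) ` Delta2 \<subseteq> interior P"
        unfolding translate_affine_image[symmetric] affine_image_Delta2 image_add_convex_hull .
      then show False using free R_unimodular_copy_affine_image Mf r(2) by metis
    qed
  qed
  then show ?thesis using that Mf r(2) by metis
qed

end

lemma witness_triangle_if_locked:
  assumes pg: "polygon P" and lk: "locked F P"
  shows "\<exists>D. R_unimodular_copy Delta2 D \<and> D \<subseteq> P \<and> F \<inter> D \<noteq> {} \<and> F \<inter> D \<subseteq> rel_interior F \<and>
           aff_dim (mink_diff P (convex hull {v. v extreme_point_of D \<and> v \<notin> F \<inter> D})) = 2"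
proof -
  have fc: "F facet_of P" and free: "R_Delta2_free P" using lk unfolding locked_def by auto
  obtain a b e e' where ab: "a \<noteq> 0" "P \<subseteq> {y. a \<bullet> y \<le> b}" "F = P \<inter> {y. a \<bullet> y = b}"
    "F = closed_segment e e'" "e \<noteq> e'" "affine hull F = {y. a \<bullet> y = b}"
    using facet_of_polygon_segment[OF pg fc] by blast
  interpret polygon_edge P a b e e'
    using ab pg polygon_imp_convex polygon_imp_compact
    by unfold_locales (auto simp: polygon_def polytope_imp_polyhedron)
  have no_copy: "\<not> D \<subseteq> interior P" if "R_unimodular_copy Delta2 D" for D
    using free that polygon_rel_interior_eq_interior[OF pg] unfolding R_Delta2_free_def by auto
  have "\<exists>D. R_unimodular_copy Delta2 D \<and> D \<subseteq> interior (convex hull (insert x P))" if "b < a \<bullet> x" for x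
  proof -
    have "interior P \<subseteq> {y. a \<bullet> y < b}" using interior_mono[OF ab(2)] ab(1) by simp
    then have "beyond F P x" unfolding beyond_def using ab(1,6) that by blast
    then show ?thesis using lk unfolding locked_def by blast
  qed
  then obtain M0 c0 t s where M0: "\<forall>i j. M0$i$j \<in> \<int>" "\<bar>det M0\<bar> = 1"
    and lim: "cap_limit P a b e e' {c0, M0 *v axis 1 1 + c0, M0 *v axis 2 1 + c0} t s"
    using cap_limit_if_locked no_copy by blast
  let ?V = "{c0, M0 *v axis 1 1 + c0, M0 *v axis 2 1 + c0}"
  obtain tau where tau: "(\<lambda>y. y + tau) ` (convex hull ?V) \<subseteq> P"
    "closed_segment e e' \<inter> (\<lambda>y. y + tau) ` (convex hull ?V) \<noteq> {}"
    "closed_segment e e' \<inter> (\<lambda>y. y + tau) ` (convex hull ?V) \<subseteq> open_segment e e'"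
    "aff_dim (mink_diff P (convex hull {v. v extreme_point_of ((\<lambda>y. y + tau) ` (convex hull ?V)) \<and>
        v \<notin> closed_segment e e' \<inter> (\<lambda>y. y + tau) ` (convex hull ?V)})) = 2"
    by (rule cap_limit.translate_witness[OF lim])
  define D where "D = (\<lambda>y. M0 *v y + (c0 + tau)) ` Delta2"
  have "(\<lambda>y. y + tau) ` (convex hull ?V) = D"
    unfolding D_def translate_affine_image[symmetric] affine_image_Delta2 ..
  note tau = tau[unfolded this, folded ab(4)]
  have "rel_interior F = open_segment e e'" using ab(4,5) by (simp add: rel_interior_closed_segment)
  moreover have "R_unimodular_copy Delta2 D" unfolding D_def using M0 by (rule R_unimodular_copy_affine_image)
  ultimately show ?thesis using tau by blast
qed

theorem proposition5p6:
  fixes P F :: "(real^2) set"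
  assumes "polygon P" and "R_Delta2_free P" and "F facet_of P"
  shows "locked F P \<longleftrightarrow>
    (\<exists>D. R_unimodular_copy Delta2 D \<and> D \<subseteq> P \<and>
         F \<inter> D \<noteq> {} \<and> F \<inter> D \<subseteq> rel_interior F \<and>
         aff_dim (mink_diff P (convex hull {v. v extreme_point_of D \<and> v \<notin> F \<inter> D})) = 2)"
  using witness_triangle_if_locked[OF assms(1)] locked_if_witness_triangle[OF assms] by blast

end
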